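(* Let $(E,\rho)$ be a complete partial $b_v(s)$ metric space and let $S:E\to E$ satisfy $\rho(Su,Sw)\le\lambda\max\{\rho(u,w),\rho(u,Su),\rho(w,Sw)\}$ for all $u,w\in E$, where $\lambda\in[0,\tfrac1s)$. Then $S$ has a unique fixed point $b\in E$, and $\rho(b,b)=0$.
   Context: Let $E$ be a nonempty set and $v\in\mathbb{N}$. $(E,\rho)$, with $\rho:E\times E\to[0,\infty)$, is a partial $b_v(s)$ metric space if there is a real $s\ge1$ such that for all $u,w,z_1,\dots,z_v\in E$: (1) $u=w$ iff $\rho(u,u)=\rho(u,w)=\rho(w,w)$; (2) $\rho(u,u)\le\rho(u,w)$; (3) $\rho(u,w)=\rho(w,u)$; (4) $\rho(u,w)\le s[\rho(u,z_1)+\rho(z_1,z_2)+\dots+\rho(z_{v-1},z_v)+\rho(z_v,w)]-\sum_{i=1}^v\rho(z_i,z_i)$. A sequence $\{u_n\}$ in $E$ converges to $u\in E$ if $\lim_{n\to\infty}\rho(u_n,u)=\rho(u,u)$; it is Cauchy if $\lim_{n,m\to\infty}\rho(u_n,u_m)$ exists and is finite. $(E,\rho)$ is complete if for every Cauchy sequence $\{u_n\}$ there is $u\in E$ with $\lim_{n,m\to\infty}\rho(u_n,u_m)=\lim_{n\to\infty}\rho(u_n,u)=\rho(u,u)$. *)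

theory Defs
  imports "HOL-Analysis.Analysis"
begin

definition partial_bv_metric :: "'a set \<Rightarrow> ('a \<Rightarrow> 'a \<Rightarrow> real) \<Rightarrow> nat \<Rightarrow> real \<Rightarrow> bool" where
  "partial_bv_metric E rho v s \<longleftrightarrow>
     E \<noteq> {} \<and> v \<ge> 1 \<and> s \<ge> 1 \<and>
     (\<forall>u\<in>E. \<forall>w\<in>E. rho u w \<ge> 0) \<and>
     (\<forall>u\<in>E. \<forall>w\<in>E. (u = w \<longleftrightarrow> rho u u = rho u w \<and> rho u w = rho w w)) \<and>
     (\<forall>u\<in>E. \<forall>w\<in>E. rho u u \<le> rho u w) \<and>
     (\<forall>u\<in>E. \<forall>w\<in>E. rho u w = rho w u) \<and>
     (\<forall>u\<in>E. \<forall>w\<in>E. \<forall>z::nat \<Rightarrow> 'a. (\<forall>i\<in>{1..v}. z i \<in> E) \<longrightarrow>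
        rho u w \<le> s * (rho u (z 1) + (\<Sum>i\<in>{1..<v}. rho (z i) (z (Suc i))) + rho (z v) w)
                   - (\<Sum>i\<in>{1..v}. rho (z i) (z i)))"

definition pbv_converges :: "('a \<Rightarrow> 'a \<Rightarrow> real) \<Rightarrow> (nat \<Rightarrow> 'a) \<Rightarrow> 'a \<Rightarrow> bool" where
  "pbv_converges rho x u \<longleftrightarrow> (\<lambda>n. rho (x n) u) \<longlonglongrightarrow> rho u u"

definition pbv_double_lim :: "('a \<Rightarrow> 'a \<Rightarrow> real) \<Rightarrow> (nat \<Rightarrow> 'a) \<Rightarrow> real \<Rightarrow> bool" where
  "pbv_double_lim rho x L \<longleftrightarrow>
     (\<forall>e>0. \<exists>N. \<forall>n\<ge>N. \<forall>m\<ge>N. \<bar>rho (x n) (x m) - L\<bar> < e)"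

definition pbv_cauchy :: "('a \<Rightarrow> 'a \<Rightarrow> real) \<Rightarrow> (nat \<Rightarrow> 'a) \<Rightarrow> bool" where
  "pbv_cauchy rho x \<longleftrightarrow> (\<exists>L. pbv_double_lim rho x L)"

definition pbv_complete :: "'a set \<Rightarrow> ('a \<Rightarrow> 'a \<Rightarrow> real) \<Rightarrow> bool" where
  "pbv_complete E rho \<longleftrightarrow>
     (\<forall>x. (\<forall>n. x n \<in> E) \<longrightarrow> pbv_cauchy rho x \<longrightarrow>
        (\<exists>u\<in>E. pbv_double_lim rho x (rho u u) \<and> pbv_converges rho x u))"

end

theory Submission
  imports Defs
begin

text \<open>Taking the constant chain \<open>y, \<dots>, y\<close> in the \<open>b\<^sub>v(s)\<close> inequality gives
  \<open>\<rho>(u, w) \<le> s v \<rho>(u, y) + s \<rho>(y, w)\<close>. Along the Picard orbit \<open>x\<^sub>n = S\<^sup>n x\<^sub>0\<close> the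
  contraction forces \<open>\<rho>(x\<^sub>n, x\<^sub>n\<^sub>+\<^sub>1) \<le> \<lambda>\<^sup>n \<rho>(x\<^sub>0, S x\<^sub>0)\<close>, and splitting \<open>\<rho>(x\<^sub>n, x\<^sub>m)\<close> at
  \<open>x\<^sub>n\<^sub>+\<^sub>1\<close> only costs a factor \<open>s\<close> on the tail, so since \<open>s \<lambda> < 1\<close> induction gives
  \<open>\<rho>(x\<^sub>n, x\<^sub>m) \<le> D \<lambda>\<^sup>n\<close>. Hence the orbit is Cauchy with double limit \<open>0\<close>, and completeness
  yields a limit \<open>u\<close> with \<open>\<rho>(u, u) = 0\<close>. Splitting \<open>\<rho>(u, S u)\<close> at \<open>S x\<^sub>n\<close> and applying the
  contraction to \<open>\<rho>(S x\<^sub>n, S u)\<close> bounds \<open>(1 - s \<lambda>) \<rho>(u, S u)\<close> by a null sequence, so \<open>S u = u\<close>.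
  Two fixed points \<open>b, c\<close> satisfy \<open>\<rho>(b, c) \<le> \<lambda> \<rho>(b, c)\<close> and therefore coincide.\<close>

lemma pbv_double_lim_unique:
  assumes "pbv_double_lim rho x L" and "pbv_double_lim rho x L'"
  shows "L = L'"
proof (rule ccontr)
  assume "L \<noteq> L'"
  then have e: "\<bar>L - L'\<bar> / 2 > 0" by simp
  obtain N where N: "\<And>n m. n \<ge> N \<Longrightarrow> m \<ge> N \<Longrightarrow> \<bar>rho (x n) (x m) - L\<bar> < \<bar>L - L'\<bar> / 2"
    using assms(1) e unfolding pbv_double_lim_def by blast
  obtain N' where N': "\<And>n m. n \<ge> N' \<Longrightarrow> m \<ge> N' \<Longrightarrow> \<bar>rho (x n) (x m) - L'\<bar> < \<bar>L - L'\<bar> / 2"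
    using assms(2) e unfolding pbv_double_lim_def by blast
  have "\<bar>rho (x (N + N')) (x (N + N')) - L\<bar> < \<bar>L - L'\<bar> / 2" by (rule N) auto
  moreover have "\<bar>rho (x (N + N')) (x (N + N')) - L'\<bar> < \<bar>L - L'\<bar> / 2" by (rule N') auto
  ultimately show False by (simp add: abs_if split: if_split_asm)
qed

locale partial_bv_metric_space =
  fixes E :: "'a set" and rho :: "'a \<Rightarrow> 'a \<Rightarrow> real" and v :: nat and s :: real
  assumes partial_bv_metric: "partial_bv_metric E rho v s"
begin

lemma nonempty: "E \<noteq> {}"
  using partial_bv_metric unfolding partial_bv_metric_def by auto

lemma s_ge_1: "1 \<le> s"
  using partial_bv_metric unfolding partial_bv_metric_def by auto

lemma v_ge_1: "1 \<le> v"
  using partial_bv_metric unfolding partial_bv_metric_def by auto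

lemma nonneg: "u \<in> E \<Longrightarrow> w \<in> E \<Longrightarrow> 0 \<le> rho u w"
  using partial_bv_metric unfolding partial_bv_metric_def by auto

lemma self_le: "u \<in> E \<Longrightarrow> w \<in> E \<Longrightarrow> rho u u \<le> rho u w"
  using partial_bv_metric unfolding partial_bv_metric_def by auto

lemma commute: "u \<in> E \<Longrightarrow> w \<in> E \<Longrightarrow> rho u w = rho w u"
  using partial_bv_metric unfolding partial_bv_metric_def by auto

lemma eq_iff_dists_eq: "u \<in> E \<Longrightarrow> w \<in> E \<Longrightarrow> u = w \<longleftrightarrow> rho u u = rho u w \<and> rho u w = rho w w"
  using partial_bv_metric unfolding partial_bv_metric_def by auto

lemma chain_ineq:
  assumes "u \<in> E" "w \<in> E" "\<And>i. i \<in> {1..v} \<Longrightarrow> z i \<in> E"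
  shows "rho u w \<le> s * (rho u (z 1) + (\<Sum>i\<in>{1..<v}. rho (z i) (z (Suc i))) + rho (z v) w)
      - (\<Sum>i\<in>{1..v}. rho (z i) (z i))"
  using partial_bv_metric assms unfolding partial_bv_metric_def by auto

lemma eq_if_dist_zero:
  assumes "u \<in> E" "w \<in> E" and "rho u w = 0"
  shows "u = w"
proof -
  have "rho u u = 0" "rho w w = 0"
    using self_le[of u w] self_le[of w u] nonneg[of u u] nonneg[of w w] commute[of u w] assms
    by auto
  then show ?thesis
    using eq_iff_dists_eq assms by simp
qed

text \<open>The \<open>v - 1\<close> self-distances \<open>\<rho>(y, y)\<close> of the constant chain are absorbed into \<open>\<rho>(u, y)\<close>.\<close>
lemma triangle:
  assumes "u \<in> E" "w \<in> E" "y \<in> E"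
  shows "rho u w \<le> s * v * rho u y + s * rho y w"
proof -
  have "rho u w \<le> s * (rho u y + (\<Sum>i\<in>{1..<v}. rho y y) + rho y w) - (\<Sum>i\<in>{1..v}. rho y y)"
    using chain_ineq[of u w "\<lambda>_. y"] assms by simp
  also have "\<dots> \<le> s * (rho u y + (real v - 1) * rho y y + rho y w)"
    using v_ge_1 nonneg[OF assms(3) assms(3)] by (simp add: of_nat_diff)
  also have "\<dots> \<le> s * (rho u y + (real v - 1) * rho u y + rho y w)"
    using self_le[OF assms(3) assms(1)] commute[OF assms(1) assms(3)] v_ge_1 s_ge_1
    by (intro mult_left_mono add_mono) auto
  finally show ?thesis by (simp add: algebra_simps)
qed

end

locale pbv_max_contraction = partial_bv_metric_space +
  fixes lambda :: real and S :: "'a \<Rightarrow> 'a"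
  assumes maps_into: "u \<in> E \<Longrightarrow> S u \<in> E"
    and contraction: "u \<in> E \<Longrightarrow> w \<in> E \<Longrightarrow>
      rho (S u) (S w) \<le> lambda * max (rho u w) (max (rho u (S u)) (rho w (S w)))"
    and lambda_nonneg: "0 \<le> lambda"
    and lambda_less: "lambda < 1 / s"
begin

lemma s_lambda_less_1: "s * lambda < 1"
  using lambda_less s_ge_1 by (simp add: field_simps)

lemma lambda_less_1: "lambda < 1"
proof -
  have "lambda \<le> s * lambda" using s_ge_1 lambda_nonneg by (simp add: mult_le_cancel_right1)
  then show ?thesis using s_lambda_less_1 by linarith
qed

lemma eq_zero_if_le_lambda_mult: "0 \<le> r \<Longrightarrow> r \<le> lambda * r \<Longrightarrow> r = 0"
  using lambda_less_1 by (metis mult_le_cancel_right1 not_le order.antisym)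

lemma dist_step_le:
  assumes "u \<in> E"
  shows "rho (S u) (S (S u)) \<le> lambda * rho u (S u)"
proof -
  have Su: "S u \<in> E" and SSu: "S (S u) \<in> E" using assms by (auto intro: maps_into)
  have bound: "rho (S u) (S (S u)) \<le> lambda * max (rho u (S u)) (rho (S u) (S (S u)))"
    using contraction[OF assms Su] by simp
  show ?thesis
  proof (cases "rho (S u) (S (S u)) \<le> rho u (S u)")
    case True
    then show ?thesis using bound by (simp add: max_def)
  next
    case False
    then have "rho (S u) (S (S u)) = 0"
      using bound nonneg[OF Su SSu] by (intro eq_zero_if_le_lambda_mult) (auto simp: max_def)
    then show ?thesis using nonneg[OF assms Su] lambda_nonneg by simp
  qed
qed

lemma fixed_point_unique:
  assumes "b \<in> E" "c \<in> E" "S b = b" "S c = c"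
  shows "b = c"
proof -
  have "max (rho b c) (max (rho b b) (rho c c)) = rho b c"
    using self_le[of b c] self_le[of c b] commute[of b c] assms(1,2) by auto
  then have "rho b c \<le> lambda * rho b c"
    using contraction[OF assms(1,2)] assms(3,4) by simp
  then have "rho b c = 0" using nonneg assms(1,2) eq_zero_if_le_lambda_mult by blast
  then show ?thesis using eq_if_dist_zero assms(1,2) by blast
qed

lemma dist_to_image_le:
  assumes "u \<in> E" "y \<in> E"
  shows "(1 - s * lambda) * rho u (S u)
    \<le> s * v * rho (S y) u + s * lambda * (rho y u + rho y (S y))"
proof -
  have Su: "S u \<in> E" and Sy: "S y \<in> E" using assms by (auto intro: maps_into)
  have "rho (S y) (S u) \<le> lambda * max (rho y u) (max (rho y (S y)) (rho u (S u)))"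
    by (rule contraction[OF assms(2,1)])
  also have "\<dots> \<le> lambda * (rho y u + rho y (S y) + rho u (S u))"
    using nonneg[OF assms(2,1)] nonneg[OF assms(2) Sy] nonneg[OF assms(1) Su] lambda_nonneg
    by (intro mult_left_mono) auto
  finally have "s * rho (S y) (S u) \<le> s * (lambda * (rho y u + rho y (S y) + rho u (S u)))"
    using s_ge_1 by (intro mult_left_mono) auto
  moreover have "rho u (S u) \<le> s * v * rho u (S y) + s * rho (S y) (S u)"
    by (rule triangle[OF assms(1) Su Sy])
  ultimately show ?thesis
    using commute[OF assms(1) Sy] by (simp add: algebra_simps)
qed

lemma fixed_point_if_dists_tendsto_zero:
  assumes u: "u \<in> E" and y: "\<And>n. y n \<in> E"
    and y_lim: "(\<lambda>n. rho (y n) u) \<longlonglongrightarrow> 0" and Sy_lim: "(\<lambda>n. rho (S (y n)) u) \<longlonglongrightarrow> 0"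
  shows "S u = u"
proof -
  define t where "t n = s * v * rho (S (y n)) u
    + s * lambda * (rho (y n) u + (s * v * rho (y n) u + s * rho u (S (y n))))" for n
  have "t \<longlonglongrightarrow> s * v * 0 + s * lambda * (0 + (s * v * 0 + s * 0))"
    unfolding t_def
    using y_lim Sy_lim commute[OF u maps_into[OF y]]
    by (intro tendsto_intros) auto
  then have t_lim: "t \<longlonglongrightarrow> 0" by simp
  have "(1 - s * lambda) * rho u (S u) \<le> t n" for n
  proof -
    have "rho (y n) (S (y n)) \<le> s * v * rho (y n) u + s * rho u (S (y n))"
      by (rule triangle[OF y maps_into[OF y] u])
    then have "s * lambda * (rho (y n) u + rho (y n) (S (y n)))
        \<le> s * lambda * (rho (y n) u + (s * v * rho (y n) u + s * rho u (S (y n))))"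
      using s_ge_1 lambda_nonneg by (intro mult_left_mono) auto
    then show ?thesis
      using dist_to_image_le[OF u y[of n]] unfolding t_def by linarith
  qed
  then have "(1 - s * lambda) * rho u (S u) \<le> 0"
    by (intro LIMSEQ_le_const[OF t_lim]) auto
  then have "rho u (S u) = 0"
    using s_lambda_less_1 nonneg[OF u maps_into[OF u]] by (simp add: mult_le_0_iff)
  then show ?thesis using eq_if_dist_zero[OF u maps_into[OF u]] by simp
qed

context
  fixes x0 assumes x0: "x0 \<in> E"
begin

lemma orbit_in: "(S ^^ n) x0 \<in> E"
  by (induction n) (auto simp: x0 maps_into)

lemma orbit_dist_Suc_le: "rho ((S ^^ n) x0) ((S ^^ Suc n) x0) \<le> lambda ^ n * rho x0 (S x0)"
proof (induction n)
  case 0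
  then show ?case by simp
next
  case (Suc n)
  have "rho ((S ^^ Suc n) x0) ((S ^^ Suc (Suc n)) x0) \<le> lambda * rho ((S ^^ n) x0) ((S ^^ Suc n) x0)"
    using dist_step_le[OF orbit_in] by simp
  also have "\<dots> \<le> lambda ^ Suc n * rho x0 (S x0)"
    using mult_left_mono[OF Suc.IH lambda_nonneg] by (simp add: mult.assoc)
  finally show ?case .
qed

text \<open>The constant \<open>D\<close> solves \<open>D = s v \<rho>(x\<^sub>0, S x\<^sub>0) + s \<lambda> D\<close>, which is what makes the induction
  on \<open>m - n\<close> close.\<close>
lemma orbit_dist_le:
  assumes "n \<le> m"
  shows "rho ((S ^^ n) x0) ((S ^^ m) x0) \<le> s * v * rho x0 (S x0) / (1 - s * lambda) * lambda ^ n"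
proof -
  define c where "c = rho x0 (S x0)"
  define D where "D = s * v * c / (1 - s * lambda)"
  have c: "0 \<le> c" unfolding c_def using nonneg x0 maps_into by blast
  have D: "s * v * c + s * lambda * D = D"
    using s_lambda_less_1 unfolding D_def by (simp add: field_simps)
  have "c \<le> D"
  proof -
    have "1 * 1 \<le> s * v" using s_ge_1 v_ge_1 by (intro mult_mono) auto
    then have "c \<le> s * v * c" using c by (metis mult_right_mono mult_1)
    also have "\<dots> \<le> s * v * c + s * lambda * D"
      using s_ge_1 lambda_nonneg c s_lambda_less_1 unfolding D_def by simp
    finally show ?thesis using D by simp
  qed
  have "rho ((S ^^ n) x0) ((S ^^ (n + p)) x0) \<le> D * lambda ^ n" for p
  proof (induction p arbitrary: n)
    case 0
    have "rho ((S ^^ n) x0) ((S ^^ n) x0) \<le> lambda ^ n * c"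
      using self_le[OF orbit_in orbit_in] orbit_dist_Suc_le[of n] unfolding c_def by (meson order_trans)
    also have "\<dots> \<le> lambda ^ n * D" using \<open>c \<le> D\<close> lambda_nonneg by (simp add: mult_left_mono)
    finally show ?case by (simp add: mult.commute)
  next
    case (Suc p)
    have "rho ((S ^^ n) x0) ((S ^^ (n + Suc p)) x0)
        \<le> s * v * rho ((S ^^ n) x0) ((S ^^ Suc n) x0) + s * rho ((S ^^ Suc n) x0) ((S ^^ (Suc n + p)) x0)"
      using triangle[OF orbit_in[of n] orbit_in[of "n + Suc p"] orbit_in[of "Suc n"]]
      by (simp only: add_Suc_shift)
    also have "\<dots> \<le> s * v * (lambda ^ n * c) + s * (D * lambda ^ Suc n)"
      using orbit_dist_Suc_le[of n] Suc.IH[of "Suc n"] s_ge_1 unfolding c_def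
      by (intro add_mono mult_left_mono) auto
    also have "\<dots> = lambda ^ n * (s * v * c + s * lambda * D)" by (simp add: algebra_simps)
    finally show ?case using D by (simp add: mult.commute)
  qed
  from this[of "m - n"] show ?thesis using assms unfolding D_def c_def by simp
qed

lemma orbit_double_lim_zero: "pbv_double_lim rho (\<lambda>n. (S ^^ n) x0) 0"
  unfolding pbv_double_lim_def
proof (intro allI impI)
  fix e :: real
  assume "0 < e"
  define D where "D = s * v * rho x0 (S x0) / (1 - s * lambda)"
  have "(\<lambda>n. D * lambda ^ n) \<longlonglongrightarrow> D * 0"
    using lambda_nonneg lambda_less_1 by (intro tendsto_intros LIMSEQ_power_zero) auto
  then have "\<forall>\<^sub>F n in sequentially. D * lambda ^ n < e"
    using \<open>0 < e\<close> by (intro order_tendstoD(2)) auto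
  then obtain N where N: "D * lambda ^ N < e"
    unfolding eventually_sequentially by blast
  have dist_le: "rho ((S ^^ n) x0) ((S ^^ m) x0) \<le> D * lambda ^ N" if "N \<le> n" "n \<le> m" for n m
  proof -
    have "0 \<le> D"
      using s_ge_1 s_lambda_less_1 nonneg[OF x0 maps_into[OF x0]] unfolding D_def by simp
    then have "D * lambda ^ n \<le> D * lambda ^ N"
      using that lambda_nonneg lambda_less_1 by (intro mult_left_mono power_decreasing) auto
    then show ?thesis using orbit_dist_le[OF that(2)] unfolding D_def by simp
  qed
  show "\<exists>N. \<forall>n\<ge>N. \<forall>m\<ge>N. \<bar>rho ((S ^^ n) x0) ((S ^^ m) x0) - 0\<bar> < e"
  proof (intro exI allI impI)
    fix n m assume "N \<le> n" "N \<le> m"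
    then have "rho ((S ^^ n) x0) ((S ^^ m) x0) \<le> D * lambda ^ N"
      using dist_le[of n m] dist_le[of m n] commute[OF orbit_in orbit_in, of n m] by (cases "n \<le> m") auto
    then show "\<bar>rho ((S ^^ n) x0) ((S ^^ m) x0) - 0\<bar> < e"
      using N nonneg[OF orbit_in orbit_in, of n m] by simp
  qed
qed

end

end

theorem mainTheorem4:
  fixes E :: "'a set" and rho :: "'a \<Rightarrow> 'a \<Rightarrow> real" and v :: nat and s lambda :: real
    and S :: "'a \<Rightarrow> 'a"
  assumes "partial_bv_metric E rho v s"
    and "pbv_complete E rho"
    and "\<forall>u\<in>E. S u \<in> E"
    and "\<forall>u\<in>E. \<forall>w\<in>E. rho (S u) (S w) \<le> lambda * max (rho u w) (max (rho u (S u)) (rho w (S w)))"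
    and "0 \<le> lambda" and "lambda < 1 / s"
  shows "\<exists>b\<in>E. S b = b \<and> rho b b = 0 \<and> (\<forall>c\<in>E. S c = c \<longrightarrow> c = b)"
proof -
  interpret pbv_max_contraction E rho v s lambda S
    using assms by unfold_locales blast+
  obtain x0 where x0: "x0 \<in> E" using nonempty by blast
  obtain u where u: "u \<in> E"
    and lim: "pbv_double_lim rho (\<lambda>n. (S ^^ n) x0) (rho u u)"
    and conv: "pbv_converges rho (\<lambda>n. (S ^^ n) x0) u"
    using assms(2) orbit_in[OF x0] orbit_double_lim_zero[OF x0]
    unfolding pbv_complete_def pbv_cauchy_def by meson
  have uu: "rho u u = 0"
    using pbv_double_lim_unique[OF lim orbit_double_lim_zero[OF x0]] .
  have orbit_lim: "(\<lambda>n. rho ((S ^^ n) x0) u) \<longlonglongrightarrow> 0"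
    using conv uu unfolding pbv_converges_def by simp
  have "(\<lambda>n. rho (S ((S ^^ n) x0)) u) \<longlonglongrightarrow> 0"
    using LIMSEQ_Suc[OF orbit_lim] by simp
  then have "S u = u"
    using fixed_point_if_dists_tendsto_zero[OF u orbit_in[OF x0] orbit_lim] by blast
  then show ?thesis
    using u uu fixed_point_unique by blast
qed

end
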